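(* Let $m\ge1$ and let $A_m$ be an $m$-dimensional $\mathbb{Z}/2\mathbb{Z}$-vector space with the trivial partial order. If $m\le4$, there is a graph whose homological additive poset is isomorphic to $A_m$. If $m\ge5$, there is no such graph.
   Context: The trivial partial order on a $\mathbb{Z}/2\mathbb{Z}$-vector space $A$ is the order whose only relations are $0\le a$ and $a\le a$ for all $a\in A$. A graph is a 1-dimensional CW-complex. Each element of $H_1(\Gamma;\mathbb{Z}/2\mathbb{Z})$ is represented by a unique 1-cycle (finite set of edges with every vertex incident to an even number of them, with multiplicity); ordering $H_1$ by inclusion of 1-cycles gives the homological additive poset of $\Gamma$. An isomorphism of additive posets is a bijection that is a group isomorphism and an order isomorphism. *)

theory Defs
  imports Main
begin

text \<open>A graph (1-dimensional CW complex, loops and multiple edges allowed) is given by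
a vertex set V, an edge set E and an endpoint map; each edge e in E has endpoints
fst (ends e) and snd (ends e) in V (equal for a loop).\<close>

definition graph :: "'v set \<Rightarrow> 'e set \<Rightarrow> ('e \<Rightarrow> 'v \<times> 'v) \<Rightarrow> bool" where
  "graph V E ends \<longleftrightarrow> (\<forall>e\<in>E. fst (ends e) \<in> V \<and> snd (ends e) \<in> V)"

text \<open>Number of edge-ends of the edge set C at vertex v (a loop counts twice).\<close>
definition incid :: "('e \<Rightarrow> 'v \<times> 'v) \<Rightarrow> 'e set \<Rightarrow> 'v \<Rightarrow> nat" where
  "incid ends C v = card {e\<in>C. fst (ends e) = v} + card {e\<in>C. snd (ends e) = v}"

text \<open>Mod-2 1-cycles: finite edge sets with even incidence at every vertex.
These are in bijection with H_1(Gamma; Z/2).\<close>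
definition cycles :: "'v set \<Rightarrow> 'e set \<Rightarrow> ('e \<Rightarrow> 'v \<times> 'v) \<Rightarrow> 'e set set" where
  "cycles V E ends = {C. finite C \<and> C \<subseteq> E \<and> (\<forall>v\<in>V. even (incid ends C v))}"

text \<open>Addition in Z/2 vector spaces of sets: symmetric difference.\<close>
definition symdiff :: "'a set \<Rightarrow> 'a set \<Rightarrow> 'a set" where
  "symdiff A B = (A - B) \<union> (B - A)"

text \<open>A_m: the m-dimensional Z/2-vector space, modelled as subsets of {..<m} with
symmetric difference; trivial partial order: a \<le> b iff a = 0 or a = b.\<close>
definition Am :: "nat \<Rightarrow> nat set set" where
  "Am m = Pow {..<m}"

definition triv_le :: "'a set \<Rightarrow> 'a set \<Rightarrow> bool" where
  "triv_le a b \<longleftrightarrow> a = {} \<or> a = b"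

text \<open>Isomorphism of additive posets between the homological additive poset
(cycles, symmetric difference, inclusion) and A_m (trivial order).\<close>
definition hom_poset_iso_Am :: "'v set \<Rightarrow> 'e set \<Rightarrow> ('e \<Rightarrow> 'v \<times> 'v) \<Rightarrow> nat \<Rightarrow> bool" where
  "hom_poset_iso_Am V E ends m \<longleftrightarrow>
     (\<exists>f. bij_betw f (cycles V E ends) (Am m)
        \<and> (\<forall>C\<in>cycles V E ends. \<forall>D\<in>cycles V E ends. f (symdiff C D) = symdiff (f C) (f D))
        \<and> (\<forall>C\<in>cycles V E ends. \<forall>D\<in>cycles V E ends. C \<subseteq> D \<longleftrightarrow> triv_le (f C) (f D)))"

end

theory Submission
  imports Defs
begin

text \<open>Since the cycle space Z of a graph is closed under symmetric difference, its inclusion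
order is trivial exactly when any two nonzero cycles share an edge: a cycle D disjoint from
C would give C \<subseteq> C + D. Such intersecting cycle spaces have at most 16 elements. By
induction on the number of edges one may delete edges lying on no cycle and suppress
vertices of degree two. If some at most four edges span at most as many vertices, they
contain a nonzero cycle C with |C| \<le> 4, and D \<mapsto> D \<inter> C is injective on Z, so
|Z| \<le> 2^4. Otherwise the graph has minimum degree three and girth at least five, hence at
least 1 + 3 + 6 vertices; but deleting an edge of a cycle halves Z, so |Z| \<le> 32 by
induction, and dim Z \<ge> |E| - |V| + 1 together with 3|V| \<le> 2|E| leaves at most 8
vertices. Conversely K(3,3) has an intersecting cycle space of dimension 4, and removing
chords of a spanning tree lowers the dimension one at a time.\<close>

section \<open>Cycle spaces of edge sets\<close>

definition edge_deg :: "('e \<Rightarrow> 'v \<times> 'v) \<Rightarrow> 'e \<Rightarrow> 'v \<Rightarrow> nat" where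
  "edge_deg ends e v = (if fst (ends e) = v then 1 else 0) + (if snd (ends e) = v then 1 else 0)"

definition edge_ends :: "('e \<Rightarrow> 'v \<times> 'v) \<Rightarrow> 'e \<Rightarrow> 'v set" where
  "edge_ends ends e = {fst (ends e), snd (ends e)}"

definition verts :: "('e \<Rightarrow> 'v \<times> 'v) \<Rightarrow> 'e set \<Rightarrow> 'v set" where
  "verts ends F = \<Union> (edge_ends ends ` F)"

text \<open>Unlike \<open>cycles\<close>, parity is required at every vertex; vertices not touched by F
have incidence 0 anyway.\<close>

definition cycle_space :: "('e \<Rightarrow> 'v \<times> 'v) \<Rightarrow> 'e set \<Rightarrow> 'e set set" where
  "cycle_space ends F = {C. C \<subseteq> F \<and> (\<forall>v. even (incid ends C v))}"

definition intersecting :: "'a set set \<Rightarrow> bool" where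
  "intersecting Z \<longleftrightarrow> (\<forall>C\<in>Z. \<forall>D\<in>Z. C \<noteq> {} \<longrightarrow> D \<noteq> {} \<longrightarrow> C \<inter> D \<noteq> {})"

lemma incid_eq_sum: "finite C \<Longrightarrow> incid ends C v = (\<Sum>e\<in>C. edge_deg ends e v)"
  by (simp add: incid_def edge_deg_def sum.distrib sum.If_cases Int_def)

lemma finite_verts: "finite F \<Longrightarrow> finite (verts ends F)"
  by (simp add: verts_def edge_ends_def)

lemma verts_mono: "C \<subseteq> F \<Longrightarrow> verts ends C \<subseteq> verts ends F"
  by (auto simp: verts_def)

lemma incid_outside_verts: "finite C \<Longrightarrow> v \<notin> verts ends C \<Longrightarrow> incid ends C v = 0"
  by (auto simp: incid_eq_sum edge_deg_def verts_def edge_ends_def)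

lemma incid_mono: "finite F \<Longrightarrow> C \<subseteq> F \<Longrightarrow> incid ends C v \<le> incid ends F v"
  by (simp add: incid_eq_sum finite_subset sum_mono2)

lemma incid_symdiff:
  assumes "finite C" "finite D"
  shows "incid ends (symdiff C D) v + 2 * incid ends (C \<inter> D) v = incid ends C v + incid ends D v"
proof -
  let ?s = "\<lambda>A. \<Sum>e\<in>A. edge_deg ends e v"
  have "symdiff C D \<union> (C \<inter> D) = C \<union> D" "symdiff C D \<inter> (C \<inter> D) = {}"
    by (auto simp: symdiff_def)
  then have "?s (C \<union> D) = ?s (symdiff C D) + ?s (C \<inter> D)"
    using assms by (metis finite_Un sum.union_disjoint)
  moreover have "?s (C \<union> D) + ?s (C \<inter> D) = ?s C + ?s D"
    using assms by (rule sum.union_inter)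
  ultimately show ?thesis
    using assms by (simp add: incid_eq_sum symdiff_def)
qed

lemma even_incid_symdiff:
  "finite C \<Longrightarrow> finite D \<Longrightarrow>
    even (incid ends (symdiff C D) v) \<longleftrightarrow> (even (incid ends C v) \<longleftrightarrow> even (incid ends D v))"
  using incid_symdiff[of C D ends v] by (metis even_add even_mult_iff even_numeral)

lemma symdiff_self [simp]: "symdiff C C = {}"
  by (auto simp: symdiff_def)

lemma symdiff_eq_empty_iff: "symdiff C D = {} \<longleftrightarrow> C = D"
  by (auto simp: symdiff_def)

lemma symdiff_symdiff_cancel [simp]: "symdiff (symdiff C D) D = C"
  by (auto simp: symdiff_def)

lemma finite_cycle_space: "finite F \<Longrightarrow> finite (cycle_space ends F)"
  by (rule finite_subset[of _ "Pow F"]) (auto simp: cycle_space_def)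

lemma cycle_space_mono: "F0 \<subseteq> F \<Longrightarrow> cycle_space ends F0 \<subseteq> cycle_space ends F"
  by (auto simp: cycle_space_def)

lemma symdiff_in_cycle_space:
  assumes "finite F" "C \<in> cycle_space ends F" "D \<in> cycle_space ends F"
  shows "symdiff C D \<in> cycle_space ends F"
proof -
  have "finite C" "finite D"
    using assms by (auto simp: cycle_space_def intro: finite_subset)
  then show ?thesis
    using assms even_incid_symdiff[of C D ends] by (auto simp: cycle_space_def symdiff_def)
qed

lemma intersecting_subset: "Z0 \<subseteq> Z \<Longrightarrow> intersecting Z \<Longrightarrow> intersecting Z0"
  by (auto simp: intersecting_def)

lemma intersecting_iff_subset_trivial:
  assumes closed: "\<And>C D. C \<in> Z \<Longrightarrow> D \<in> Z \<Longrightarrow> symdiff C D \<in> Z"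
  shows "intersecting Z \<longleftrightarrow> (\<forall>C\<in>Z. \<forall>D\<in>Z. C \<subseteq> D \<longrightarrow> C = {} \<or> C = D)"
proof
  assume Z: "intersecting Z"
  show "\<forall>C\<in>Z. \<forall>D\<in>Z. C \<subseteq> D \<longrightarrow> C = {} \<or> C = D"
  proof (intro ballI impI)
    fix C D assume C: "C \<in> Z" and D: "D \<in> Z" and "C \<subseteq> D"
    then have "symdiff C D = D - C" by (auto simp: symdiff_def)
    then have "D - C \<in> Z" using closed[OF C D] by simp
    then have "C = {} \<or> D - C = {}"
      using Z C unfolding intersecting_def by auto
    then show "C = {} \<or> C = D" using \<open>C \<subseteq> D\<close> by blast
  qed
next
  assume triv: "\<forall>C\<in>Z. \<forall>D\<in>Z. C \<subseteq> D \<longrightarrow> C = {} \<or> C = D"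
  show "intersecting Z"
    unfolding intersecting_def
  proof (intro ballI impI notI)
    fix C D assume C: "C \<in> Z" and D: "D \<in> Z" and "C \<noteq> {}" "D \<noteq> {}" "C \<inter> D = {}"
    then have "symdiff C D = C \<union> D" by (auto simp: symdiff_def)
    then have "C \<union> D \<in> Z" using closed[OF C D] by simp
    then have "C = C \<union> D"
      using triv[rule_format, OF C \<open>C \<union> D \<in> Z\<close>] \<open>C \<noteq> {}\<close> by blast
    then show False
      using \<open>D \<noteq> {}\<close> \<open>C \<inter> D = {}\<close> by blast
  qed
qed

section \<open>Counting cycles\<close>

lemma card_cycle_space_le_pow_card:
  assumes "finite F" "intersecting (cycle_space ends F)" "C \<in> cycle_space ends F" "C \<noteq> {}"
  shows "card (cycle_space ends F) \<le> 2 ^ card C"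
proof -
  have fC: "finite C" using assms by (auto simp: cycle_space_def intro: finite_subset)
  have "inj_on (\<lambda>D. D \<inter> C) (cycle_space ends F)"
  proof (rule inj_onI)
    fix D1 D2 assume D: "D1 \<in> cycle_space ends F" "D2 \<in> cycle_space ends F" "D1 \<inter> C = D2 \<inter> C"
    have "symdiff D1 D2 \<in> cycle_space ends F" using symdiff_in_cycle_space assms(1) D by blast
    moreover have "symdiff D1 D2 \<inter> C = {}" using D(3) by (auto simp: symdiff_def)
    ultimately have "symdiff D1 D2 = {}"
      using assms(2-4) unfolding intersecting_def by auto
    then show "D1 = D2" by (simp add: symdiff_eq_empty_iff)
  qed
  then have "card (cycle_space ends F) \<le> card (Pow C)"
    by (rule card_inj_on_le) (auto simp: fC)
  then show ?thesis by (simp add: card_Pow fC)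
qed

lemma sum_incid_eq_double_card:
  assumes "finite C" "finite U" "verts ends C \<subseteq> U"
  shows "(\<Sum>v\<in>U. incid ends C v) = 2 * card C"
proof -
  have "(\<Sum>v\<in>U. incid ends C v) = (\<Sum>v\<in>U. \<Sum>e\<in>C. edge_deg ends e v)"
    using assms by (simp add: incid_eq_sum)
  also have "\<dots> = (\<Sum>e\<in>C. \<Sum>v\<in>U. edge_deg ends e v)"
    by (rule sum.swap)
  also have "\<dots> = (\<Sum>e\<in>C. 2)"
  proof (rule sum.cong)
    fix e assume "e \<in> C"
    then have "fst (ends e) \<in> U" "snd (ends e) \<in> U" using assms(3) by (auto simp: verts_def edge_ends_def)
    then show "(\<Sum>v\<in>U. edge_deg ends e v) = 2"
      using assms(2) by (simp add: edge_deg_def sum.distrib)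
  qed simp
  finally show ?thesis by simp
qed

lemma even_sum_iff_even_card_odd:
  "finite U \<Longrightarrow> even (\<Sum>v\<in>U. h v) \<longleftrightarrow> even (card {v\<in>U. odd (h v :: nat)})"
proof (induction U rule: finite_induct)
  case (insert x U)
  have "{v \<in> insert x U. odd (h v)} = (if odd (h x) then insert x {v\<in>U. odd (h v)} else {v\<in>U. odd (h v)})"
    by auto
  then have "card {v \<in> insert x U. odd (h v)} = card {v\<in>U. odd (h v)} + of_bool (odd (h x))"
    using insert by simp
  then show ?case using insert by simp
qed simp

lemma even_card_odd_incid:
  assumes "finite C" "finite U" "verts ends C \<subseteq> U"
  shows "even (card {v\<in>U. odd (incid ends C v)})"
  using sum_incid_eq_double_card[OF assms] even_sum_iff_even_card_odd[OF assms(2), of "incid ends C"]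
  by simp

lemma card_even_subsets_le:
  assumes "finite W" "w \<in> W" "\<And>S. S \<in> SS \<Longrightarrow> S \<subseteq> W \<and> even (card S)"
  shows "card SS \<le> 2 ^ (card W - 1)"
proof -
  have w_iff: "w \<in> S \<longleftrightarrow> odd (card (S - {w}))" if "S \<in> SS" for S
  proof (cases "w \<in> S")
    case True
    have "finite S" using assms(3)[OF that] assms(1) by (auto intro: finite_subset)
    then have "card S = Suc (card (S - {w}))" using True by (simp only: card_Suc_Diff1)
    then show ?thesis using assms(3)[OF that] True by (simp only: even_Suc) simp
  next
    case False
    then show ?thesis using assms(3)[OF that] by simp
  qed
  have "inj_on (\<lambda>S. S - {w}) SS"
  proof (rule inj_onI)
    fix S1 S2 assume S: "S1 \<in> SS" "S2 \<in> SS" and eq: "S1 - {w} = S2 - {w}"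
    have "w \<in> S1 \<longleftrightarrow> w \<in> S2" unfolding w_iff[OF S(1)] w_iff[OF S(2)] eq ..
    then show "S1 = S2" using eq by blast
  qed
  moreover have "(\<lambda>S. S - {w}) ` SS \<subseteq> Pow (W - {w})" using assms(3) by blast
  ultimately have "card SS \<le> card (Pow (W - {w}))"
    using assms(1) by (intro card_inj_on_le) auto
  then show ?thesis using assms by (simp add: card_Pow)
qed

lemma card_le_card_image_mult:
  assumes "finite A" "\<And>a. a \<in> A \<Longrightarrow> card {x\<in>A. h x = h a} \<le> k"
  shows "card A \<le> card (h ` A) * k"
proof -
  have "(\<Union>b\<in>h ` A. {x\<in>A. h x = b}) = A" by auto
  then have "card A \<le> (\<Sum>b\<in>h ` A. card {x\<in>A. h x = b})"
    using card_UN_le[of "h ` A" "\<lambda>b. {x\<in>A. h x = b}"] assms(1) by simp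
  also have "\<dots> \<le> (\<Sum>b\<in>h ` A. k)"
    by (rule sum_mono) (use assms(2) in auto)
  finally show ?thesis by simp
qed

text \<open>The dimension of the cycle space is at least |F| - |V| + 1: the boundary map
C \<mapsto> {v. odd (incid C v)} has the cycle space as fibres and takes at most 2^(|V|-1)
values, all of even cardinality.\<close>

lemma pow_card_le_card_cycle_space:
  assumes fF: "finite F" and ne: "F \<noteq> {}"
  shows "2 ^ card F \<le> card (cycle_space ends F) * 2 ^ (card (verts ends F) - 1)"
proof -
  define W where "W = verts ends F"
  define bd where "bd C = {v\<in>W. odd (incid ends C v)}" for C
  have fW: "finite W" using fF by (simp add: W_def finite_verts)
  obtain w where w: "w \<in> W" using ne by (auto simp: W_def verts_def edge_ends_def)
  have fin: "C \<subseteq> F \<Longrightarrow> finite C" for C using rev_finite_subset[OF fF] .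
  have same_bd: "symdiff D C \<in> cycle_space ends F" if "C \<subseteq> F" "D \<subseteq> F" "bd D = bd C" for C D
  proof -
    have "even (incid ends (symdiff D C) v)" for v
    proof (cases "v \<in> W")
      case True
      then show ?thesis using that fin even_incid_symdiff[of D C ends v] unfolding bd_def by blast
    next
      case False
      then have "v \<notin> verts ends C" "v \<notin> verts ends D"
        using verts_mono[of C F ends] verts_mono[of D F ends] that by (auto simp: W_def)
      then show ?thesis
        using incid_outside_verts[of C v ends] incid_outside_verts[of D v ends]
          even_incid_symdiff[of D C ends v] fin that by auto
    qed
    then show ?thesis using that by (auto simp: cycle_space_def symdiff_def)
  qed
  have fibre: "card {D\<in>Pow F. bd D = bd C} \<le> card (cycle_space ends F)" if "C \<in> Pow F" for C
  proof -
    have "{D\<in>Pow F. bd D = bd C} \<subseteq> (\<lambda>X. symdiff X C) ` cycle_space ends F"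
    proof
      fix D assume "D \<in> {D\<in>Pow F. bd D = bd C}"
      then have "symdiff D C \<in> cycle_space ends F" using same_bd that by auto
      then show "D \<in> (\<lambda>X. symdiff X C) ` cycle_space ends F"
        by (rule image_eqI[rotated]) simp
    qed
    then have "card {D\<in>Pow F. bd D = bd C} \<le> card ((\<lambda>X. symdiff X C) ` cycle_space ends F)"
      using fF by (intro card_mono finite_imageI finite_cycle_space)
    also have "\<dots> \<le> card (cycle_space ends F)"
      by (rule card_image_le) (simp add: fF finite_cycle_space)
    finally show ?thesis .
  qed
  have "card (bd ` Pow F) \<le> 2 ^ (card W - 1)"
  proof (rule card_even_subsets_le[OF fW w])
    fix S assume "S \<in> bd ` Pow F"
    then obtain C where C: "C \<subseteq> F" "S = bd C" by auto
    then have "verts ends C \<subseteq> W" by (simp add: W_def verts_mono)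
    then show "S \<subseteq> W \<and> even (card S)"
      using even_card_odd_incid[OF fin[OF C(1)] fW] C(2) by (simp add: bd_def)
  qed
  then have "card (bd ` Pow F) * card (cycle_space ends F)
      \<le> 2 ^ (card W - 1) * card (cycle_space ends F)"
    by (rule mult_le_mono1)
  moreover have "card (Pow F) \<le> card (bd ` Pow F) * card (cycle_space ends F)"
    by (rule card_le_card_image_mult) (use fF fibre in auto)
  ultimately have "card (Pow F) \<le> 2 ^ (card W - 1) * card (cycle_space ends F)"
    by (rule le_trans[rotated])
  then show ?thesis
    using fF by (simp add: card_Pow W_def mult.commute)
qed

lemma card_cycle_space_eq_double:
  assumes fF: "finite F" and C: "C \<in> cycle_space ends F" "g \<in> C"
  shows "card (cycle_space ends F) = 2 * card (cycle_space ends (F - {g}))"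
proof -
  define Z0 where "Z0 = {D\<in>cycle_space ends F. g \<notin> D}"
  define Z1 where "Z1 = {D\<in>cycle_space ends F. g \<in> D}"
  have "bij_betw (\<lambda>D. symdiff D C) Z0 Z1"
    by (rule bij_betw_byWitness[where f' = "\<lambda>D. symdiff D C"])
       (use symdiff_in_cycle_space[OF fF _ C(1)] C(2) in \<open>auto simp: Z0_def Z1_def symdiff_def\<close>)
  then have "card Z1 = card Z0" by (simp add: bij_betw_same_card)
  moreover have "cycle_space ends F = Z0 \<union> Z1" "Z0 \<inter> Z1 = {}" by (auto simp: Z0_def Z1_def)
  moreover have "Z0 = cycle_space ends (F - {g})" by (auto simp: Z0_def cycle_space_def)
  moreover have "finite Z0" "finite Z1"
    using fF finite_cycle_space[of F ends] by (auto simp: Z0_def Z1_def)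
  ultimately show ?thesis by (simp add: card_Un_disjoint)
qed

section \<open>Suppressing a vertex of degree two\<close>

definition opposite_end :: "('e \<Rightarrow> 'v \<times> 'v) \<Rightarrow> 'v \<Rightarrow> 'e \<Rightarrow> 'v" where
  "opposite_end ends v e = (if fst (ends e) = v then snd (ends e) else fst (ends e))"

lemma edge_deg_pos: "v \<in> edge_ends ends e \<Longrightarrow> 1 \<le> edge_deg ends e v"
  by (auto simp: edge_deg_def edge_ends_def)

lemma edge_deg_eq_one:
  assumes "edge_deg ends e v = 1"
  shows "edge_deg ends e x = (if x = v then 1 else 0) + (if x = opposite_end ends v e then 1 else 0)"
  using assms by (auto simp: edge_deg_def opposite_end_def split: if_splits)

text \<open>The two edges e and f at v are replaced by the single edge f, with its endpoint v
moved to the far end of e; cycles correspond via \<open>merge\<close>.\<close>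

locale degree_two_vertex =
  fixes ends :: "'e \<Rightarrow> 'v \<times> 'v" and F :: "'e set" and e f :: 'e and v :: 'v
  assumes finite_F: "finite F" and e_in_F: "e \<in> F" and f_in_F: "f \<in> F" and e_ne_f: "e \<noteq> f"
    and v_e: "v \<in> edge_ends ends e" and v_f: "v \<in> edge_ends ends f"
    and incid_v: "incid ends F v = 2"
begin

definition ends' :: "'e \<Rightarrow> 'v \<times> 'v" where
  "ends' = ends(f := (opposite_end ends v e, opposite_end ends v f))"

definition merge :: "'e set \<Rightarrow> 'e set" where
  "merge C = (if f \<in> C then insert e C else C)"

lemma edge_deg_at_v:
  "edge_deg ends e v = 1" "edge_deg ends f v = 1" "g \<in> F - {e, f} \<Longrightarrow> edge_deg ends g v = 0"
proof -
  have sum: "incid ends F v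
      = edge_deg ends e v + edge_deg ends f v + (\<Sum>g\<in>F - {e, f}. edge_deg ends g v)"
    using finite_F e_in_F f_in_F e_ne_f
    by (simp add: incid_eq_sum sum.remove[of F e] sum.remove[of "F - {e}" f] Diff_insert2[symmetric])
  have pos: "1 \<le> edge_deg ends e v" "1 \<le> edge_deg ends f v"
    using v_e v_f by (simp_all add: edge_deg_pos del: One_nat_def)
  show "edge_deg ends e v = 1" "edge_deg ends f v = 1"
    using sum pos incid_v by linarith+
  have "(\<Sum>g\<in>F - {e, f}. edge_deg ends g v) = 0"
    using sum pos incid_v by linarith
  then show "g \<in> F - {e, f} \<Longrightarrow> edge_deg ends g v = 0"
    using finite_F by simp
qed

lemma edge_deg_ends'_other: "g \<noteq> f \<Longrightarrow> edge_deg ends' g x = edge_deg ends g x"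
  by (simp add: ends'_def edge_deg_def)

lemma even_incid_ends':
  assumes C: "C \<subseteq> F - {e}"
  shows "even (incid ends' C x) \<longleftrightarrow> even (incid ends (merge C) x)"
proof (cases "f \<in> C")
  case False
  have "finite C" using C finite_F by (auto intro: finite_subset)
  then have "incid ends' C x = incid ends C x"
    unfolding incid_eq_sum[OF \<open>finite C\<close>]
    using False by (intro sum.cong refl edge_deg_ends'_other) auto
  then show ?thesis using False by (simp add: merge_def)
next
  case True
  have fC: "finite C" using C finite_F by (auto intro: finite_subset)
  have "e \<notin> C" using C by auto
  have rest: "incid ends' (C - {f}) x = incid ends (C - {f}) x"
    using fC by (simp add: incid_eq_sum) (intro sum.cong refl edge_deg_ends'_other; simp)
  have "incid ends' C x = edge_deg ends' f x + incid ends (C - {f}) x"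
    using fC True rest by (simp add: incid_eq_sum sum.remove)
  moreover have "incid ends (merge C) x
      = edge_deg ends e x + edge_deg ends f x + incid ends (C - {f}) x"
    using fC True \<open>e \<notin> C\<close> by (simp add: merge_def incid_eq_sum sum.remove)
  moreover have "edge_deg ends e x + edge_deg ends f x = edge_deg ends' f x + 2 * (if x = v then 1 else 0)"
    using edge_deg_eq_one[OF edge_deg_at_v(1)] edge_deg_eq_one[OF edge_deg_at_v(2)]
    by (simp add: ends'_def edge_deg_def)
  ultimately show ?thesis by simp
qed

lemma mem_cycle_e_iff_f:
  assumes "D \<in> cycle_space ends F"
  shows "e \<in> D \<longleftrightarrow> f \<in> D"
proof -
  have D: "D \<subseteq> F" "even (incid ends D v)" and fD: "finite D"
    using assms finite_F by (auto simp: cycle_space_def intro: finite_subset)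
  have "incid ends D v = (\<Sum>g\<in>D. (if g = e then 1 else 0) + (if g = f then 1 else 0))"
    unfolding incid_eq_sum[OF fD]
    using D(1) edge_deg_at_v e_ne_f by (intro sum.cong) auto
  also have "\<dots> = (if e \<in> D then 1 else 0) + (if f \<in> D then 1 else 0)"
    using fD by (simp add: sum.distrib)
  finally show ?thesis using D(2) by (auto split: if_splits)
qed

lemma bij_betw_merge: "bij_betw merge (cycle_space ends' (F - {e})) (cycle_space ends F)"
proof (rule bij_betw_byWitness[where f' = "\<lambda>D. D - {e}"])
  show "\<forall>C\<in>cycle_space ends' (F - {e}). merge C - {e} = C"
    by (auto simp: merge_def cycle_space_def)
  show "\<forall>D\<in>cycle_space ends F. merge (D - {e}) = D"
    using mem_cycle_e_iff_f e_ne_f by (auto simp: merge_def)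
  show "merge ` cycle_space ends' (F - {e}) \<subseteq> cycle_space ends F"
    using even_incid_ends' e_in_F by (auto simp: cycle_space_def merge_def)
  show "(\<lambda>D. D - {e}) ` cycle_space ends F \<subseteq> cycle_space ends' (F - {e})"
  proof
    fix C assume "C \<in> (\<lambda>D. D - {e}) ` cycle_space ends F"
    then obtain D where D: "D \<in> cycle_space ends F" "C = D - {e}" by auto
    then have "merge C = D" using mem_cycle_e_iff_f e_ne_f by (auto simp: merge_def)
    moreover have "C \<subseteq> F - {e}" using D by (auto simp: cycle_space_def)
    ultimately show "C \<in> cycle_space ends' (F - {e})"
      using D even_incid_ends'[of C] by (auto simp: cycle_space_def)
  qed
qed

lemma card_cycle_space_ends': "card (cycle_space ends' (F - {e})) = card (cycle_space ends F)"
  using bij_betw_merge by (rule bij_betw_same_card)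

lemma intersecting_ends':
  assumes "intersecting (cycle_space ends F)"
  shows "intersecting (cycle_space ends' (F - {e}))"
  unfolding intersecting_def
proof (intro ballI impI)
  fix C D assume C: "C \<in> cycle_space ends' (F - {e})" and D: "D \<in> cycle_space ends' (F - {e})"
    and "C \<noteq> {}" "D \<noteq> {}"
  then have "merge C \<in> cycle_space ends F" "merge D \<in> cycle_space ends F"
    "merge C \<noteq> {}" "merge D \<noteq> {}"
    using bij_betwE[OF bij_betw_merge] by (auto simp: merge_def)
  then obtain t where t: "t \<in> merge C" "t \<in> merge D"
    using assms unfolding intersecting_def by blast
  have "e \<notin> C" "e \<notin> D" using C D by (auto simp: cycle_space_def)
  then show "C \<inter> D \<noteq> {}"
    using t by (cases "t = e") (auto simp: merge_def split: if_splits)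
qed

end

section \<open>Minimum degree three and girth five\<close>

lemma card_verts_le_8:
  assumes fF: "finite F" and ne: "F \<noteq> {}"
    and min_deg: "\<And>v. v \<in> verts ends F \<Longrightarrow> 3 \<le> incid ends F v"
    and card_Z: "card (cycle_space ends F) \<le> 32"
  shows "card (verts ends F) \<le> 8"
proof -
  define b where "b = card (verts ends F)"
  have fW: "finite (verts ends F)" using fF by (rule finite_verts)
  have "verts ends F \<noteq> {}" using ne by (auto simp: verts_def edge_ends_def)
  then have "1 \<le> b" using fW by (simp add: b_def Suc_le_eq card_gt_0_iff)
  have "2 ^ card F \<le> card (cycle_space ends F) * 2 ^ (b - 1)"
    using pow_card_le_card_cycle_space[OF fF ne] by (simp add: b_def)
  also have "\<dots> \<le> 2 ^ 5 * 2 ^ (b - 1)" using card_Z by simp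
  also have "\<dots> = 2 ^ (5 + (b - 1))" by (simp only: power_add)
  also have "\<dots> = 2 ^ (b + 4)" using \<open>1 \<le> b\<close> by simp
  finally have "card F \<le> b + 4" by simp
  moreover have "3 * b \<le> 2 * card F"
  proof -
    have "3 * b = (\<Sum>v\<in>verts ends F. 3)" by (simp add: b_def)
    also have "\<dots> \<le> (\<Sum>v\<in>verts ends F. incid ends F v)" by (rule sum_mono) (rule min_deg)
    also have "\<dots> = 2 * card F" using sum_incid_eq_double_card[OF fF fW] by simp
    finally show ?thesis .
  qed
  ultimately show ?thesis by (simp add: b_def)
qed

text \<open>The hypothesis \<open>sparse\<close> excludes loops, multiple edges, triangles and
quadrilaterals. Hence a vertex, its at least three neighbours and their at least two further
neighbours each are all distinct (the Moore bound 1 + 3 + 3 \<cdot> 2).\<close>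

locale sparse_min_degree_three =
  fixes ends :: "'e \<Rightarrow> 'v \<times> 'v" and F :: "'e set"
  assumes finite_F: "finite F"
    and min_degree: "\<And>v. v \<in> verts ends F \<Longrightarrow> 3 \<le> incid ends F v"
    and sparse: "\<And>F0. F0 \<subseteq> F \<Longrightarrow> F0 \<noteq> {} \<Longrightarrow> card F0 \<le> 4 \<Longrightarrow> card F0 < card (verts ends F0)"
begin

definition neighbours :: "'v \<Rightarrow> 'v set" where
  "neighbours v = opposite_end ends v ` {e\<in>F. v \<in> edge_ends ends e}"

lemma no_loop: "e \<in> F \<Longrightarrow> fst (ends e) \<noteq> snd (ends e)"
  using sparse[of "{e}"] by (auto simp: verts_def edge_ends_def)

lemma inj_on_edge_ends: "inj_on (edge_ends ends) F"
proof (rule inj_onI, rule ccontr)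
  fix e1 e2 assume e: "e1 \<in> F" "e2 \<in> F" "edge_ends ends e1 = edge_ends ends e2" "e1 \<noteq> e2"
  then have "card (verts ends {e1, e2}) \<le> 2"
    using e(3) by (auto simp: verts_def edge_ends_def card_insert_if)
  then show False
    using sparse[of "{e1, e2}"] e by simp
qed

lemma edge_ends_eq:
  "e \<in> F \<Longrightarrow> v \<in> edge_ends ends e \<Longrightarrow> edge_ends ends e = {v, opposite_end ends v e}"
  by (auto simp: edge_ends_def opposite_end_def)

lemma opposite_end_ne: "e \<in> F \<Longrightarrow> v \<in> edge_ends ends e \<Longrightarrow> opposite_end ends v e \<noteq> v"
  using no_loop[of e] by (auto simp: edge_ends_def opposite_end_def)

lemma mem_neighbours: "x \<in> neighbours v \<longleftrightarrow> (\<exists>e\<in>F. edge_ends ends e = {v, x}) \<and> x \<noteq> v"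
proof
  assume "x \<in> neighbours v"
  then obtain e where e: "e \<in> F" "v \<in> edge_ends ends e" "x = opposite_end ends v e"
    by (auto simp: neighbours_def)
  then show "(\<exists>e\<in>F. edge_ends ends e = {v, x}) \<and> x \<noteq> v"
    using edge_ends_eq[OF e(1,2)] opposite_end_ne[OF e(1,2)] by auto
next
  assume "(\<exists>e\<in>F. edge_ends ends e = {v, x}) \<and> x \<noteq> v"
  then obtain e where e: "e \<in> F" "edge_ends ends e = {v, x}" "x \<noteq> v" by blast
  then have "{v, opposite_end ends v e} = {v, x}" "opposite_end ends v e \<noteq> v"
    using edge_ends_eq[of e v] opposite_end_ne[of e v] by (auto simp: edge_ends_def)
  then have "x = opposite_end ends v e" by (auto simp: doubleton_eq_iff)
  then show "x \<in> neighbours v" using e by (auto simp: neighbours_def)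
qed

lemma neighbours_subset_verts: "neighbours v \<subseteq> verts ends F"
  unfolding mem_neighbours subset_iff verts_def by auto

lemma edge_deg_eq_if: "e \<in> F \<Longrightarrow> edge_deg ends e v = (if v \<in> edge_ends ends e then 1 else 0)"
  using no_loop[of e] by (auto simp: edge_deg_def edge_ends_def)

lemma three_le_card_neighbours:
  assumes "v \<in> verts ends F"
  shows "3 \<le> card (neighbours v)"
proof -
  define S where "S = {e\<in>F. v \<in> edge_ends ends e}"
  have "incid ends F v = (\<Sum>e\<in>F. if v \<in> edge_ends ends e then 1 else 0)"
    unfolding incid_eq_sum[OF finite_F] by (rule sum.cong) (simp_all add: edge_deg_eq_if)
  also have "\<dots> = card S" using finite_F by (simp add: sum.If_cases S_def Int_def)
  finally have "3 \<le> card S" using min_degree[OF assms] by simp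
  moreover have "inj_on (opposite_end ends v) S"
  proof (rule inj_onI)
    fix e1 e2 assume "e1 \<in> S" "e2 \<in> S" "opposite_end ends v e1 = opposite_end ends v e2"
    then have "edge_ends ends e1 = edge_ends ends e2" "e1 \<in> F" "e2 \<in> F"
      using edge_ends_eq[of e1 v] edge_ends_eq[of e2 v] by (auto simp: S_def)
    then show "e1 = e2" using inj_on_edge_ends by (auto dest: inj_onD)
  qed
  ultimately show ?thesis by (simp add: neighbours_def card_image S_def)
qed

lemma no_short_cycle:
  assumes P: "P \<subseteq> edge_ends ends ` F" "P \<noteq> {}" "card P \<le> 4"
    and X: "\<Union>P \<subseteq> X" "finite X" "card X \<le> card P"
  shows False
proof -
  define F0 where "F0 = {e\<in>F. edge_ends ends e \<in> P}"
  have "bij_betw (edge_ends ends) F0 P"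
    using P(1) inj_on_edge_ends by (auto simp: bij_betw_def F0_def inj_on_def)
  then have "card F0 = card P" "verts ends F0 = \<Union>P"
    by (auto simp: bij_betw_same_card verts_def bij_betw_def)
  moreover have "F0 \<noteq> {}" using P(1,2) by (force simp: F0_def)
  ultimately show False
    using sparse[of F0] P(3) X card_mono[of X "\<Union>P"] by (auto simp: F0_def)
qed

lemma no_triangle:
  assumes "x \<in> neighbours v" "y \<in> neighbours x" "y \<in> neighbours v"
  shows False
proof -
  have "{v, x, y} \<noteq> {}" by simp
  have d: "x \<noteq> v" "y \<noteq> x" "y \<noteq> v" using assms by (simp_all add: mem_neighbours)
  show False
    by (rule no_short_cycle[of "{{v, x}, {x, y}, {v, y}}" "{v, x, y}"])
       (use assms d in \<open>auto simp: mem_neighbours card_insert_if doubleton_eq_iff insert_commute\<close>)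
qed

lemma no_square:
  assumes "x \<in> neighbours v" "x' \<in> neighbours v" "x \<noteq> x'"
    and "y \<in> neighbours x" "y \<in> neighbours x'" "y \<noteq> v"
  shows False
proof -
  have d: "x \<noteq> v" "x' \<noteq> v" "y \<noteq> x" "y \<noteq> x'" using assms by (simp_all add: mem_neighbours)
  show False
    by (rule no_short_cycle[of "{{v, x}, {v, x'}, {x, y}, {x', y}}" "{v, x, x', y}"])
       (use assms d in \<open>auto simp: mem_neighbours card_insert_if doubleton_eq_iff insert_commute\<close>)
qed

lemma ten_le_card_verts:
  assumes "F \<noteq> {}"
  shows "10 \<le> card (verts ends F)"
proof -
  obtain v where v: "v \<in> verts ends F" using assms by (auto simp: verts_def edge_ends_def)
  define N where "N = neighbours v"
  define S where "S x = neighbours x - {v}" for x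
  have fW: "finite (verts ends F)" using finite_F by (rule finite_verts)
  have N_sub: "N \<subseteq> verts ends F" and fN: "finite N"
    using neighbours_subset_verts fW by (auto simp: N_def intro: finite_subset)
  have S_sub: "S x \<subseteq> verts ends F" and fS: "finite (S x)" for x
    using neighbours_subset_verts[of x] fW by (auto simp: S_def intro: finite_subset)
  have "2 \<le> card (S x)" if "x \<in> N" for x
  proof -
    have "3 \<le> card (neighbours x)" using that N_sub by (intro three_le_card_neighbours) auto
    then show ?thesis using diff_card_le_card_Diff[of "{v}" "neighbours x"] by (simp add: S_def)
  qed
  then have "(\<Sum>x\<in>N. 2) \<le> (\<Sum>x\<in>N. card (S x))" by (rule sum_mono)
  then have "2 * card N \<le> (\<Sum>x\<in>N. card (S x))" by (simp add: mult.commute)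
  also have "\<dots> = card (\<Union>x\<in>N. S x)"
    using fN fS no_square by (intro card_UN_disjoint[symmetric]) (auto simp: N_def S_def)
  finally have "2 * card N \<le> card (\<Union>x\<in>N. S x)" .
  moreover have "N \<inter> S x = {}" if "x \<in> N" for x
    using no_triangle[of x v] that by (auto simp: N_def S_def)
  then have "N \<inter> (\<Union>x\<in>N. S x) = {}" by blast
  moreover have "v \<notin> N" "v \<notin> (\<Union>x\<in>N. S x)" by (auto simp: N_def S_def mem_neighbours)
  moreover have "3 \<le> card N" using three_le_card_neighbours[OF v] by (simp add: N_def)
  moreover have "card (insert v (N \<union> (\<Union>x\<in>N. S x))) \<le> card (verts ends F)"
    using v N_sub S_sub fW by (intro card_mono) auto
  ultimately show ?thesis
    using fN fS by (simp add: card_Un_disjoint)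
qed

end

section \<open>Intersecting cycle spaces have at most 16 elements\<close>

lemma exists_nonempty_cycle:
  assumes "finite F" "F \<noteq> {}" "card (verts ends F) \<le> card F"
  shows "\<exists>C\<in>cycle_space ends F. C \<noteq> {}"
proof (rule ccontr)
  assume "\<not> ?thesis"
  then have "cycle_space ends F \<subseteq> {{}}" by auto
  then have "card (cycle_space ends F) \<le> 1" using card_mono[of "{{}}"] by simp
  then have "card (cycle_space ends F) * 2 ^ (card (verts ends F) - 1) \<le> 1 * 2 ^ (card (verts ends F) - 1)"
    by (rule mult_le_mono1)
  then have "(2::nat) ^ card F \<le> 1 * 2 ^ (card (verts ends F) - 1)"
    using pow_card_le_card_cycle_space[OF assms(1,2), of ends] by linarith
  then have "card F \<le> card (verts ends F) - 1" by simp
  moreover have "0 < card F" using assms(1,2) by (simp add: card_gt_0_iff)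
  ultimately show False using assms(3) by linarith
qed

lemma card_cycle_space_le_16_of_dense_subset:
  assumes fF: "finite F" and I: "intersecting (cycle_space ends F)"
    and F0: "F0 \<subseteq> F" "F0 \<noteq> {}" "card F0 \<le> 4" "card (verts ends F0) \<le> card F0"
  shows "card (cycle_space ends F) \<le> 16"
proof -
  have fF0: "finite F0" using F0(1) fF by (rule finite_subset)
  obtain C where C: "C \<in> cycle_space ends F0" "C \<noteq> {}"
    using exists_nonempty_cycle[OF fF0 F0(2,4)] by blast
  then have "card C \<le> 4"
    using card_mono[OF fF0, of C] F0(3) by (auto simp: cycle_space_def)
  then have "(2::nat) ^ card C \<le> 2 ^ 4" by (rule power_increasing) simp
  moreover have "C \<in> cycle_space ends F" using C(1) cycle_space_mono[OF F0(1)] by blast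
  ultimately show ?thesis using card_cycle_space_le_pow_card[OF fF I _ C(2)] by simp
qed

lemma three_le_incid_of_irreducible:
  assumes fF: "finite F" and v: "v \<in> verts ends F"
    and covered: "\<forall>e\<in>F. \<exists>C\<in>cycle_space ends F. e \<in> C"
    and loopless: "\<forall>e\<in>F. fst (ends e) \<noteq> snd (ends e)"
    and no_deg2: "\<And>e f. \<not> degree_two_vertex ends F e f v"
  shows "3 \<le> incid ends F v"
proof -
  obtain e where e: "e \<in> F" "v \<in> edge_ends ends e" using v by (auto simp: verts_def)
  obtain C where C: "C \<in> cycle_space ends F" "e \<in> C" using covered e(1) by blast
  have fC: "finite C" and CF: "C \<subseteq> F" and even: "even (incid ends C v)"
    using C fF by (auto simp: cycle_space_def intro: finite_subset)
  have "edge_deg ends e v \<le> incid ends C v"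
    unfolding incid_eq_sum[OF fC] using C(2) fC by (intro member_le_sum) auto
  moreover have "incid ends C v \<noteq> 1" using even by auto
  ultimately have "2 \<le> incid ends C v" using edge_deg_pos[OF e(2)] by linarith
  then have "2 \<le> incid ends F v" using incid_mono[OF fF CF, of ends v] by linarith
  moreover have "incid ends F v \<noteq> 2"
  proof
    assume deg: "incid ends F v = 2"
    have "edge_deg ends e v = 1" using loopless e by (auto simp: edge_deg_def edge_ends_def)
    moreover have "incid ends F v = edge_deg ends e v + (\<Sum>g\<in>F - {e}. edge_deg ends g v)"
      using fF e(1) by (simp add: incid_eq_sum sum.remove)
    ultimately have "(\<Sum>g\<in>F - {e}. edge_deg ends g v) \<noteq> 0" using deg by simp
    then obtain f where "f \<in> F - {e}" "edge_deg ends f v \<noteq> 0"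
      by (rule sum.not_neutral_contains_not_neutral)
    then have "degree_two_vertex ends F e f v"
      using fF e deg by unfold_locales (auto simp: edge_deg_def edge_ends_def split: if_splits)
    then show False using no_deg2 by blast
  qed
  ultimately show ?thesis by linarith
qed

lemma card_cycle_space_gt_32_of_irreducible:
  assumes fF: "finite F" and ne: "F \<noteq> {}"
    and covered: "\<forall>e\<in>F. \<exists>C\<in>cycle_space ends F. e \<in> C"
    and no_dense: "\<And>F0. F0 \<subseteq> F \<Longrightarrow> F0 \<noteq> {} \<Longrightarrow> card F0 \<le> 4 \<Longrightarrow> card F0 < card (verts ends F0)"
    and no_deg2: "\<And>e f v. \<not> degree_two_vertex ends F e f v"
  shows "32 < card (cycle_space ends F)"
proof -
  have loopless: "\<forall>e\<in>F. fst (ends e) \<noteq> snd (ends e)"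
  proof
    fix e assume "e \<in> F"
    then show "fst (ends e) \<noteq> snd (ends e)"
      using no_dense[of "{e}"] by (auto simp: verts_def edge_ends_def)
  qed
  interpret sparse_min_degree_three ends F
  proof
    show "3 \<le> incid ends F v" if "v \<in> verts ends F" for v
      using three_le_incid_of_irreducible[OF fF that covered loopless no_deg2] .
  qed (use fF no_dense in auto)
  show ?thesis
    using card_verts_le_8[OF fF ne min_degree] ten_le_card_verts[OF ne] by linarith
qed

theorem card_cycle_space_le_16:
  fixes ends :: "'e \<Rightarrow> 'v \<times> 'v"
  shows "finite F \<Longrightarrow> intersecting (cycle_space ends F) \<Longrightarrow> card (cycle_space ends F) \<le> 16"
proof (induction "card F" arbitrary: F ends rule: less_induct)
  case (less F ends)
  then have fF: "finite F" and I: "intersecting (cycle_space ends F)" by blast+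
  have IH: "card (cycle_space ends' F') \<le> 16"
    if "F' \<subseteq> F - {e}" "e \<in> F" "intersecting (cycle_space ends' F')"
    for F' e and ends' :: "'e \<Rightarrow> 'v \<times> 'v"
  proof (rule less.hyps)
    have "F' \<subset> F" using that(1,2) by blast
    then show "card F' < card F" using fF by (simp add: psubset_card_mono)
    show "finite F'" using \<open>F' \<subset> F\<close> rev_finite_subset[OF fF] by blast
  qed (rule that(3))
  consider (empty) "F = {}"
    | (uncovered) e where "e \<in> F" "\<forall>C\<in>cycle_space ends F. e \<notin> C"
    | (dense) F0 where "F0 \<subseteq> F" "F0 \<noteq> {}" "card F0 \<le> 4" "card (verts ends F0) \<le> card F0"
    | (degree_two) e f v where "degree_two_vertex ends F e f v"
    | (irreducible) "F \<noteq> {}" "\<forall>e\<in>F. \<exists>C\<in>cycle_space ends F. e \<in> C"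
        "\<And>F0. F0 \<subseteq> F \<Longrightarrow> F0 \<noteq> {} \<Longrightarrow> card F0 \<le> 4 \<Longrightarrow> card F0 < card (verts ends F0)"
        "\<And>e f v. \<not> degree_two_vertex ends F e f v"
    by (atomize_elim, auto simp: not_less)
  then show ?case
  proof cases
    case empty
    then have "cycle_space ends F = {{}}" by (auto simp: cycle_space_def incid_def)
    then show ?thesis by simp
  next
    case (uncovered e)
    then have "cycle_space ends (F - {e}) = cycle_space ends F" by (auto simp: cycle_space_def)
    then show ?thesis using IH[of "F - {e}" e ends] uncovered I by simp
  next
    case dense
    then show ?thesis by (rule card_cycle_space_le_16_of_dense_subset[OF fF I])
  next
    case (degree_two e f v)
    then interpret degree_two_vertex ends F e f v .
    show ?thesis
      using IH[of "F - {e}" e ends'] intersecting_ends'[OF I] card_cycle_space_ends' e_in_F by simp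
  next
    case irreducible
    obtain g C where gC: "C \<in> cycle_space ends F" "g \<in> C" using irreducible(1,2) by blast
    then have "g \<in> F" by (auto simp: cycle_space_def)
    moreover have "intersecting (cycle_space ends (F - {g}))"
      by (rule intersecting_subset[OF cycle_space_mono[OF Diff_subset] I])
    ultimately have "card (cycle_space ends (F - {g})) \<le> 16" by (intro IH) auto
    then show ?thesis
      using card_cycle_space_eq_double[OF fF gC] card_cycle_space_gt_32_of_irreducible[OF fF irreducible]
      by simp
  qed
qed

section \<open>The homological additive poset\<close>

lemma symdiff_in_cycles:
  assumes "C \<in> cycles V E ends" "D \<in> cycles V E ends"
  shows "symdiff C D \<in> cycles V E ends"
  using assms even_incid_symdiff[of C D ends]
  by (auto simp: cycles_def symdiff_def)

lemma empty_in_cycles: "{} \<in> cycles V E ends"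
  by (simp add: cycles_def incid_def)

lemma subset_iff_triv_le_iff_intersecting:
  assumes closed: "\<And>C D. C \<in> Z \<Longrightarrow> D \<in> Z \<Longrightarrow> symdiff C D \<in> Z" and empty: "{} \<in> Z"
    and inj: "inj_on f Z" and add: "\<forall>C\<in>Z. \<forall>D\<in>Z. f (symdiff C D) = symdiff (f C) (f D)"
  shows "(\<forall>C\<in>Z. \<forall>D\<in>Z. C \<subseteq> D \<longleftrightarrow> triv_le (f C) (f D)) \<longleftrightarrow> intersecting Z"
proof -
  have "f {} = symdiff (f {}) (f {})" using add empty by (metis symdiff_self)
  then have "f {} = {}" by simp
  then have triv: "triv_le (f C) (f D) \<longleftrightarrow> C = {} \<or> C = D" if "C \<in> Z" "D \<in> Z" for C D
    using inj that empty by (auto simp: triv_le_def dest: inj_onD)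
  have "(\<forall>C\<in>Z. \<forall>D\<in>Z. C \<subseteq> D \<longleftrightarrow> triv_le (f C) (f D))
      \<longleftrightarrow> (\<forall>C\<in>Z. \<forall>D\<in>Z. C \<subseteq> D \<longleftrightarrow> C = {} \<or> C = D)"
    using triv by auto
  also have "\<dots> \<longleftrightarrow> (\<forall>C\<in>Z. \<forall>D\<in>Z. C \<subseteq> D \<longrightarrow> C = {} \<or> C = D)"
    by auto
  also have "\<dots> \<longleftrightarrow> intersecting Z"
    by (rule intersecting_iff_subset_trivial[OF closed, symmetric])
  finally show ?thesis .
qed

lemma hom_poset_iso_Am_iff:
  "hom_poset_iso_Am V E ends m \<longleftrightarrow> intersecting (cycles V E ends) \<and>
     (\<exists>f. bij_betw f (cycles V E ends) (Am m) \<and>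
        (\<forall>C\<in>cycles V E ends. \<forall>D\<in>cycles V E ends. f (symdiff C D) = symdiff (f C) (f D)))"
    (is "_ \<longleftrightarrow> _ \<and> (\<exists>f. ?bij f \<and> ?add f)")
proof -
  have order_iff: "(\<forall>C\<in>cycles V E ends. \<forall>D\<in>cycles V E ends. C \<subseteq> D \<longleftrightarrow> triv_le (f C) (f D))
      \<longleftrightarrow> intersecting (cycles V E ends)" if "?bij f" "?add f" for f
    using subset_iff_triv_le_iff_intersecting[OF symdiff_in_cycles empty_in_cycles
        bij_betw_imp_inj_on[OF that(1)] that(2)] .
  show ?thesis
    unfolding hom_poset_iso_Am_def
  proof (intro iffI; elim exE conjE)
    fix f assume f: "?bij f" "?add f"
      and "\<forall>C\<in>cycles V E ends. \<forall>D\<in>cycles V E ends. C \<subseteq> D \<longleftrightarrow> triv_le (f C) (f D)"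
    then have "intersecting (cycles V E ends)" by (simp add: order_iff[OF f])
    with f show "intersecting (cycles V E ends) \<and> (\<exists>f. ?bij f \<and> ?add f)" by blast
  next
    fix f assume "intersecting (cycles V E ends)" and f: "?bij f" "?add f"
    then have "\<forall>C\<in>cycles V E ends. \<forall>D\<in>cycles V E ends. C \<subseteq> D \<longleftrightarrow> triv_le (f C) (f D)"
      by (simp add: order_iff[OF f])
    with f show "\<exists>f. ?bij f \<and> ?add f \<and>
        (\<forall>C\<in>cycles V E ends. \<forall>D\<in>cycles V E ends. C \<subseteq> D \<longleftrightarrow> triv_le (f C) (f D))"
      by blast
  qed
qed

lemma cycles_eq_cycle_space:
  assumes "graph V E ends" and "finite (\<Union> (cycles V E ends))"
  shows "cycles V E ends = cycle_space ends (\<Union> (cycles V E ends))"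
proof
  show "cycles V E ends \<subseteq> cycle_space ends (\<Union> (cycles V E ends))"
  proof
    fix C assume C: "C \<in> cycles V E ends"
    have "incid ends C v = 0" if "v \<notin> V" for v
      using C assms(1) that by (auto simp: incid_def cycles_def graph_def)
    then show "C \<in> cycle_space ends (\<Union> (cycles V E ends))"
      using C by (auto simp: cycle_space_def cycles_def)
  qed
  show "cycle_space ends (\<Union> (cycles V E ends)) \<subseteq> cycles V E ends"
    using assms(2) by (auto simp: cycle_space_def cycles_def intro: finite_subset)
qed

theorem hom_poset_iso_Am_imp_le_4:
  assumes "graph V E ends" "hom_poset_iso_Am V E ends m"
  shows "m \<le> 4"
proof -
  obtain f where f: "bij_betw f (cycles V E ends) (Am m)"
    and I: "intersecting (cycles V E ends)"
    using assms(2) by (auto simp: hom_poset_iso_Am_iff)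
  then have fin: "finite (cycles V E ends)" and card: "card (cycles V E ends) = 2 ^ m"
    by (auto simp: bij_betw_finite bij_betw_same_card Am_def card_Pow)
  then have "finite (\<Union> (cycles V E ends))" by (auto simp: cycles_def)
  then have "(2::nat) ^ m \<le> 2 ^ 4"
    using card_cycle_space_le_16[of "\<Union> (cycles V E ends)" ends] I
      cycles_eq_cycle_space[OF assms(1)] card by simp
  then show ?thesis using power_le_imp_le_exp[of "2::nat" m 4] by simp
qed

section \<open>Subgraphs of K(3,3)\<close>

text \<open>K(3,3) on the vertices 0, 1, 2 (rows) and 3, 4, 5 (columns): edge e = 3 r + c
joins row r to column 3 + c. The edges 2, 5, 6, 7, 8 form a spanning tree, whose chords
0, 1, 3, 4 close the four fundamental cycles.\<close>

definition k33_ends :: "nat \<Rightarrow> nat \<times> nat" where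
  "k33_ends e = (e div 3, 3 + e mod 3)"

definition chord :: "nat \<Rightarrow> nat" where
  "chord i = [0, 1, 3, 4] ! i"

definition fundamental_cycle :: "nat \<Rightarrow> nat set" where
  "fundamental_cycle i = set ([[0, 2, 6, 8], [1, 2, 7, 8], [3, 5, 6, 8], [4, 5, 7, 8]] ! i)"

definition k33_minus_chords :: "nat \<Rightarrow> nat set" where
  "k33_minus_chords m = {..8} - chord ` {m..<4}"

lemma less_4_cases: "(i::nat) < 4 \<Longrightarrow> i = 0 \<or> i = 1 \<or> i = 2 \<or> i = 3"
  by auto

lemma incid_set_list:
  "distinct xs \<Longrightarrow>
    incid ends (set xs) v = length (filter (\<lambda>e. fst (ends e) = v) xs) + length (filter (\<lambda>e. snd (ends e) = v) xs)"
  by (simp add: incid_def distinct_card[symmetric] flip: set_filter)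

lemma incid_k33_row: "C \<subseteq> {..8} \<Longrightarrow> r \<le> 2 \<Longrightarrow> incid k33_ends C r = card {e\<in>C. e div 3 = r}"
  by (simp add: incid_def k33_ends_def)

lemma incid_k33_col: "C \<subseteq> {..8} \<Longrightarrow> c \<le> 2 \<Longrightarrow> incid k33_ends C (3 + c) = card {e\<in>C. e mod 3 = c}"
proof -
  assume "C \<subseteq> {..8}"
  then have no_fst: "{e\<in>C. fst (k33_ends e) = 3 + c} = {}"
    by (fastforce simp: k33_ends_def dest: div_le_mono[of _ 8 3])
  show ?thesis unfolding incid_def no_fst by (simp add: k33_ends_def)
qed

lemma card_k33_row: "r \<le> 2 \<Longrightarrow> card {e\<in>{..8::nat}. e div 3 = r} = 3"
proof -
  assume "r \<le> 2"
  have "card {e\<in>{..8::nat}. e div 3 = r} = card (set (filter (\<lambda>e. e div 3 = r) [0..<9]))"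
    by (rule arg_cong[where f = card]) auto
  also have "\<dots> = length (filter (\<lambda>e. e div 3 = r) [0..<9])"
    by (rule distinct_card) simp
  finally have "card {e\<in>{..8::nat}. e div 3 = r} = length (filter (\<lambda>e. e div 3 = r) [0..<9])" .
  moreover have "r = 0 \<or> r = 1 \<or> r = 2" using \<open>r \<le> 2\<close> by auto
  ultimately show ?thesis by (auto simp: upt_rec)
qed

lemma k33_tree_cycle_empty:
  assumes X: "X \<subseteq> {2, 5, 6, 7, 8}" and even: "\<forall>v\<le>5. even (incid k33_ends X v)"
  shows "X = {}"
proof -
  have X8: "X \<subseteq> {..8}" using X by auto
  have row: "even (card {e\<in>X. e div 3 = r})" if "r \<le> 2" for r
    using even[rule_format, of r] incid_k33_row[OF X8 that] that by simp
  have col: "even (card {e\<in>X. e mod 3 = c})" if "c \<le> 2" for c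
    using even[rule_format, of "3 + c"] incid_k33_col[OF X8 that] that by simp
  have leaf: "a \<notin> X" if "P a" "{e\<in>X. P e} \<subseteq> {a}" "even (card {e\<in>X. P e})" for a P
  proof
    assume "a \<in> X"
    then have "{e\<in>X. P e} = {a}" using that(1,2) by blast
    then show False using that(3) by simp
  qed
  have "2 \<notin> X" by (rule leaf[of "\<lambda>e. e div 3 = 0"]) (use X row in auto)
  moreover have "5 \<notin> X" by (rule leaf[of "\<lambda>e. e div 3 = 1"]) (use X row in auto)
  moreover have "6 \<notin> X" by (rule leaf[of "\<lambda>e. e mod 3 = 0"]) (use X col in auto)
  moreover have "7 \<notin> X" by (rule leaf[of "\<lambda>e. e mod 3 = 1"]) (use X col in auto)
  moreover have "8 \<notin> X"
    by (rule leaf[of "\<lambda>e. e div 3 = 2"]) (use X row \<open>6 \<notin> X\<close> \<open>7 \<notin> X\<close> in auto)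
  ultimately show ?thesis using X by auto
qed

lemma k33_cycle_two_rows:
  assumes C: "C \<subseteq> {..8}" "C \<noteq> {}" and even: "\<forall>v\<le>5. even (incid k33_ends C v)"
  obtains e e' where "e \<in> C" "e' \<in> C" "e div 3 \<noteq> e' div 3"
proof -
  obtain e where e: "e \<in> C" using C by auto
  define S where "S = {e'\<in>C. e' mod 3 = e mod 3}"
  have "e mod 3 \<le> 2" by simp
  then have "even (card S)"
    using even[rule_format, of "3 + e mod 3"] incid_k33_col[OF C(1), of "e mod 3"] by (simp add: S_def)
  moreover have "finite S" using C(1) by (auto simp: S_def intro: finite_subset)
  ultimately have "S \<noteq> {e}" by auto
  moreover have "e \<in> S" using e by (simp add: S_def)
  ultimately obtain e' where e': "e' \<in> C" "e' mod 3 = e mod 3" "e' \<noteq> e" by (auto simp: S_def)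
  then have "e div 3 \<noteq> e' div 3" by (metis div_mult_mod_eq)
  then show thesis using that e e' by blast
qed

lemma k33_cycles_intersect:
  assumes C: "C \<subseteq> {..8}" "C \<noteq> {}" "\<forall>v\<le>5. even (incid k33_ends C v)"
    and D: "D \<subseteq> {..8}" "D \<noteq> {}" "\<forall>v\<le>5. even (incid k33_ends D v)"
  shows "C \<inter> D \<noteq> {}"
proof
  assume disj: "C \<inter> D = {}"
  have two: "2 \<le> card {e\<in>X. e div 3 = r}"
    if X: "X \<subseteq> {..8}" "\<forall>v\<le>5. even (incid k33_ends X v)" and "e \<in> X" "e div 3 = r" for X e r
  proof -
    have "r \<le> 2" using that by auto
    then have "even (card {e\<in>X. e div 3 = r})"
      using X(2)[rule_format, of r] incid_k33_row[OF X(1)] by simp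
    moreover have "card {e\<in>X. e div 3 = r} \<noteq> 0"
      using that X(1) by (auto simp: finite_subset)
    ultimately show ?thesis by presburger
  qed
  have row_shared: False if "e \<in> C" "d \<in> D" "e div 3 = d div 3" for e d
  proof -
    define r where "r = e div 3"
    have "r \<le> 2" using that C(1) by (auto simp: r_def)
    have "card ({e\<in>C. e div 3 = r} \<union> {e\<in>D. e div 3 = r}) \<le> card {e\<in>{..8::nat}. e div 3 = r}"
      using C(1) D(1) by (intro card_mono) auto
    moreover have "card ({e\<in>C. e div 3 = r} \<union> {e\<in>D. e div 3 = r})
        = card {e\<in>C. e div 3 = r} + card {e\<in>D. e div 3 = r}"
      using C(1) D(1) disj by (intro card_Un_disjoint) (auto intro: finite_subset)
    ultimately show False
      using two[OF C(1,3) that(1)] two[OF D(1,3) that(2)] card_k33_row[OF \<open>r \<le> 2\<close>] that(3)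
      by (simp add: r_def)
  qed
  obtain c1 c2 where c: "c1 \<in> C" "c2 \<in> C" "c1 div 3 \<noteq> c2 div 3"
    using k33_cycle_two_rows[OF C] .
  obtain d1 d2 where d: "d1 \<in> D" "d2 \<in> D" "d1 div 3 \<noteq> d2 div 3"
    using k33_cycle_two_rows[OF D] .
  have "c1 div 3 \<le> 2" "c2 div 3 \<le> 2" "d1 div 3 \<le> 2" "d2 div 3 \<le> 2"
    using c d C(1) D(1) by auto
  then show False using row_shared c d by (metis le_SucE numeral_2_eq_2 le_0_eq)
qed

lemma inj_on_chord: "inj_on chord {..<4}"
  by (auto simp: inj_on_def chord_def dest!: less_4_cases)

lemma chord_le_8: "i < 4 \<Longrightarrow> chord i \<le> 8"
  by (auto simp: chord_def dest!: less_4_cases)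

lemma tree_edges: "{..8} - chord ` {..<4} = {2, 5, 6, 7, 8}"
proof -
  have "{..<4::nat} = {0, 1, 2, 3}" "{..8::nat} = {0, 1, 2, 3, 4, 5, 6, 7, 8}" by auto
  then show ?thesis by (simp add: chord_def insert_Diff_if)
qed

lemma chord_mem_k33_minus_chords:
  assumes "i < 4"
  shows "chord i \<in> k33_minus_chords m \<longleftrightarrow> i < m"
proof -
  have "chord i \<in> chord ` {m..<4} \<longleftrightarrow> i \<in> {m..<4}"
    by (rule inj_on_image_mem_iff[OF inj_on_chord]) (use assms in auto)
  then show ?thesis using chord_le_8[OF assms] assms by (auto simp: k33_minus_chords_def)
qed

lemma chord_mem_fundamental_cycle:
  "i < 4 \<Longrightarrow> j < 4 \<Longrightarrow> chord j \<in> fundamental_cycle i \<longleftrightarrow> j = i"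
  by (drule less_4_cases, drule less_4_cases, elim disjE) (simp_all add: chord_def fundamental_cycle_def)

lemma even_incid_fundamental_cycle:
  assumes "i < 4" "v \<le> 5"
  shows "even (incid k33_ends (fundamental_cycle i) v)"
proof -
  define xs :: "nat list" where "xs = [[0, 2, 6, 8], [1, 2, 7, 8], [3, 5, 6, 8], [4, 5, 7, 8]] ! i"
  have "distinct xs" using less_4_cases[OF assms(1)] by (auto simp: xs_def)
  then have "incid k33_ends (fundamental_cycle i) v
      = length (filter (\<lambda>e. fst (k33_ends e) = v) xs) + length (filter (\<lambda>e. snd (k33_ends e) = v) xs)"
    unfolding fundamental_cycle_def xs_def[symmetric] by (rule incid_set_list)
  moreover have "v = 0 \<or> v = 1 \<or> v = 2 \<or> v = 3 \<or> v = 4 \<or> v = 5" using assms(2) by auto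
  ultimately show ?thesis using less_4_cases[OF assms(1)]
    by (elim disjE) (simp_all add: xs_def k33_ends_def)
qed

lemma fundamental_cycle_subset:
  assumes "i < m" "m \<le> 4"
  shows "fundamental_cycle i \<subseteq> k33_minus_chords m"
proof -
  have "fundamental_cycle i \<subseteq> {..8}"
    using less_4_cases[of i] assms by (auto simp: fundamental_cycle_def)
  moreover have "chord j \<notin> fundamental_cycle i" if "m \<le> j" "j < 4" for j
    using chord_mem_fundamental_cycle[of i j] that assms by simp
  ultimately show ?thesis by (auto simp: k33_minus_chords_def)
qed

lemma k33_minus_chords_subset: "k33_minus_chords m \<subseteq> {..8}"
  by (auto simp: k33_minus_chords_def)

lemma graph_k33_minus_chords: "graph {..5} (k33_minus_chords m) k33_ends"
  by (auto simp: graph_def k33_ends_def k33_minus_chords_def dest: div_le_mono[of _ 8 3])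

lemma mem_k33_cycles:
  "C \<in> cycles {..5} (k33_minus_chords m) k33_ends
    \<longleftrightarrow> C \<subseteq> k33_minus_chords m \<and> (\<forall>v\<le>5. even (incid k33_ends C v))"
  by (auto simp: cycles_def k33_minus_chords_def intro: finite_subset)

lemma k33_cycles_eq_if_same_chords:
  assumes C: "C \<in> cycles {..5} (k33_minus_chords m) k33_ends"
    and D: "D \<in> cycles {..5} (k33_minus_chords m) k33_ends"
    and same: "\<forall>i<m. chord i \<in> C \<longleftrightarrow> chord i \<in> D"
  shows "C = D"
proof -
  define X where "X = symdiff C D"
  have X: "X \<subseteq> k33_minus_chords m" "\<forall>v\<le>5. even (incid k33_ends X v)"
    using symdiff_in_cycles[OF C D] by (simp_all add: X_def mem_k33_cycles)
  have "chord i \<notin> X" if "i < 4" for i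
    using same chord_mem_k33_minus_chords[OF that] X(1) by (auto simp: X_def symdiff_def)
  then have "X \<subseteq> {2, 5, 6, 7, 8}"
    using X(1) tree_edges by (auto simp: k33_minus_chords_def)
  then have "X = {}" using X(2) by (rule k33_tree_cycle_empty)
  then show ?thesis by (simp add: X_def symdiff_eq_empty_iff)
qed

lemma k33_cycle_with_chords:
  assumes "m \<le> 4" "S \<subseteq> {..<m}"
  shows "\<exists>C\<in>cycles {..5} (k33_minus_chords m) k33_ends. {i. i < m \<and> chord i \<in> C} = S"
proof -
  have "finite S" using assms(2) by (rule finite_subset) simp
  then show ?thesis using assms(2)
  proof (induction S rule: finite_induct)
    case empty
    then show ?case using empty_in_cycles by fastforce
  next
    case (insert i S)
    then obtain C where C: "C \<in> cycles {..5} (k33_minus_chords m) k33_ends"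
      "{i. i < m \<and> chord i \<in> C} = S" by auto
    have i: "i < m" "i < 4" using insert.prems assms(1) by auto
    have Q: "fundamental_cycle i \<in> cycles {..5} (k33_minus_chords m) k33_ends"
      using fundamental_cycle_subset[OF i(1) assms(1)] even_incid_fundamental_cycle[OF i(2)]
      by (simp add: mem_k33_cycles)
    have "{j. j < m \<and> chord j \<in> symdiff C (fundamental_cycle i)} = insert i S"
      using C(2) insert.hyps(2) i assms(1) chord_mem_fundamental_cycle[OF i(2)]
      by (auto simp: symdiff_def)
    then show ?case using symdiff_in_cycles[OF C(1) Q] by blast
  qed
qed

theorem hom_poset_iso_Am_k33_minus_chords:
  assumes "m \<le> 4"
  shows "hom_poset_iso_Am {..5} (k33_minus_chords m) k33_ends m"
proof -
  define Z where "Z = cycles {..5} (k33_minus_chords m) k33_ends"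
  define f where "f C = {i. i < m \<and> chord i \<in> C}" for C
  have "intersecting Z"
    unfolding intersecting_def
  proof (intro ballI impI)
    fix C D assume "C \<in> Z" "D \<in> Z" "C \<noteq> {}" "D \<noteq> {}"
    then show "C \<inter> D \<noteq> {}"
      using k33_cycles_intersect[of C D] k33_minus_chords_subset[of m]
      by (auto simp: Z_def mem_k33_cycles)
  qed
  moreover have "inj_on f Z"
  proof (rule inj_onI)
    fix C D assume "C \<in> Z" "D \<in> Z" "f C = f D"
    then have "\<forall>i<m. chord i \<in> C \<longleftrightarrow> chord i \<in> D" by (auto simp: f_def set_eq_iff)
    with \<open>C \<in> Z\<close> \<open>D \<in> Z\<close> show "C = D"
      unfolding Z_def by (rule k33_cycles_eq_if_same_chords)
  qed
  moreover have "f ` Z = Am m"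
  proof
    show "f ` Z \<subseteq> Am m" by (auto simp: Am_def f_def)
    show "Am m \<subseteq> f ` Z"
    proof
      fix S assume "S \<in> Am m"
      then obtain C where "C \<in> Z" "f C = S"
        using k33_cycle_with_chords[OF assms] by (auto simp: Am_def f_def Z_def)
      then show "S \<in> f ` Z" by blast
    qed
  qed
  moreover have "\<forall>C\<in>Z. \<forall>D\<in>Z. f (symdiff C D) = symdiff (f C) (f D)"
    by (auto simp: f_def symdiff_def)
  ultimately show ?thesis
    unfolding hom_poset_iso_Am_iff bij_betw_def Z_def[symmetric] by blast
qed

theorem theorem13p1:
  fixes m :: nat
  assumes "m \<ge> 1"
  shows "(m \<le> 4 \<longrightarrow> (\<exists>(V::nat set) (E::nat set) (ends::nat \<Rightarrow> nat \<times> nat).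
              graph V E ends \<and> hom_poset_iso_Am V E ends m))
       \<and> (m \<ge> 5 \<longrightarrow> (\<forall>(V::'v set) (E::'e set) (ends::'e \<Rightarrow> 'v \<times> 'v).
              graph V E ends \<longrightarrow> \<not> hom_poset_iso_Am V E ends m))"
proof (intro conjI impI allI notI)
  assume "m \<le> 4"
  then have "hom_poset_iso_Am {..5} (k33_minus_chords m) k33_ends m"
    by (rule hom_poset_iso_Am_k33_minus_chords)
  with graph_k33_minus_chords
  show "\<exists>(V::nat set) (E::nat set) (ends::nat \<Rightarrow> nat \<times> nat). graph V E ends \<and> hom_poset_iso_Am V E ends m"
    by blast
next
  fix V :: "'v set" and E :: "'e set" and ends :: "'e \<Rightarrow> 'v \<times> 'v"
  assume "5 \<le> m" "graph V E ends" "hom_poset_iso_Am V E ends m"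
  then show False using hom_poset_iso_Am_imp_le_4[of V E ends m] by simp
qed

end
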